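(* Let $N\ge2$, $a\in\mathbb{R}$, $\alpha\in(0,1]$, $\sigma_r^2,\sigma_w^2\ge0$. Let $P$ be a symmetric, doubly stochastic $N\times N$ matrix with nonnegative entries and eigenvalues $-1<\lambda_N(P)\le\dots\le\lambda_2(P)<\lambda_1(P)=1$, and suppose $P$ is positive semi-definite. Let $i\neq j$ with $p_{ij}=\epsilon>0$, and let $P_{-\epsilon}=P+\epsilon(\mathbf e_i-\mathbf e_j)(\mathbf e_i-\mathbf e_j)^{\mathsf T}$ be the communication matrix obtained by removing the edge $\{i,j\}$ of weight $\epsilon$ (adding $\epsilon$ to $p_{ii}$ and $p_{jj}$). Assume $|a|<1/|\alpha|$ and that both $a(P-\alpha I_N)$ and $a(P_{-\epsilon}-\alpha I_N)$ have spectral radius less than $1$. For a symmetric matrix $M$ with eigenvalues $\lambda_1(M),\dots,\lambda_N(M)$ define $$\tilde{\mathrm{MSD}}(M,\alpha)=\frac{\sigma_r^2}{1-a^2(1-\alpha)^2}+\frac1N\sum_{k=1}^N\frac{a^2\alpha^2\sigma_w^2\lambda_k^2(M)}{1-a^2(\lambda_k(M)-\alpha)^2}.$$ Then $\tilde{\mathrm{MSD}}(P,\alpha)\le\tilde{\mathrm{MSD}}(P_{-\epsilon},\alpha)$.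
   Context: $\tilde{\mathrm{MSD}}(M,\alpha)$ is the steady-state mean square deviation per agent of the estimator $\tilde{x}_{i,t+1}=a(\sum_jm_{ij}\tilde{x}_{j,t}+\alpha(\sum_jm_{ij}y_{j,t}-\tilde{x}_{i,t}))$ for the model $x_{t+1}=ax_t+r_t$, $y_{i,t}=x_t+w_{i,t}$ with innovation variance $\sigma_r^2$ and observation-noise variance $\sigma_w^2$. $\mathbf e_i$ is the $i$-th standard basis vector of $\mathbb{R}^N$. *)

theory Defs
  imports "Jordan_Normal_Form.Spectral_Radius"
begin

text \<open>For a symmetric real matrix all
  eigenvalues are real, so this multiset has exactly dim M elements.\<close>
definition eig_mset :: "real mat \<Rightarrow> real multiset" where
  "eig_mset M = proots (char_poly M)"

definition real_spectral_radius :: "real mat \<Rightarrow> real" where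
  "real_spectral_radius M = spectral_radius (map_mat complex_of_real M)"

definition MSD_tilde :: "real \<Rightarrow> real \<Rightarrow> real \<Rightarrow> nat \<Rightarrow> real mat \<Rightarrow> real \<Rightarrow> real" where
  "MSD_tilde a sr2 sw2 N M \<alpha> =
     sr2 / (1 - a^2 * (1 - \<alpha>)^2)
     + (1 / real N) * sum_mset (image_mset
         (\<lambda>l. a^2 * \<alpha>^2 * sw2 * l^2 / (1 - a^2 * (l - \<alpha>)^2)) (eig_mset M))"

definition remove_edge :: "nat \<Rightarrow> real mat \<Rightarrow> nat \<Rightarrow> nat \<Rightarrow> real \<Rightarrow> real mat" where
  "remove_edge N P i j eps =
     (let d = unit_vec N i - unit_vec N j
      in P + eps \<cdot>\<^sub>m mat N N (\<lambda>(k,l). d $ k * d $ l))"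

end

theory Submission
  imports Defs
begin

text \<open>Removing the edge adds the rank-one positive semidefinite matrix \<open>\<epsilon> d d\<^sup>T\<close>,
  \<open>d = e\<^sub>i - e\<^sub>j\<close>, so \<open>P \<le> P\<^sub>-\<^sub>\<epsilon>\<close> in the Loewner order. Diagonalising both matrices orthogonally,
  a dimension count (Courant--Fischer) shows that for every threshold \<open>t\<close> the second matrix has
  at least as many eigenvalues above \<open>t\<close> as the first, i.e. the sorted eigenvalues increase one
  by one (Weyl monotonicity). All these eigenvalues are nonnegative, by positive semidefiniteness,
  and satisfy \<open>a\<^sup>2 (\<lambda> - \<alpha>)\<^sup>2 < 1\<close>, by the stability hypotheses; on that range
  \<open>\<lambda> \<mapsto> \<lambda>\<^sup>2 / (1 - a\<^sup>2 (\<lambda> - \<alpha>)\<^sup>2)\<close> is increasing, so the eigenvalue sum in the MSD can only grow.\<close>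

section \<open>Spectral theorem for real symmetric matrices\<close>

lemma hermitian_form_of_real_symmetric_is_real:
  fixes A :: "real mat" and v :: "complex vec"
  assumes A: "A \<in> carrier_mat n n" and sym: "transpose_mat A = A"
  shows "Im (\<Sum>i<n. \<Sum>j<n. cnj (v $ i) * complex_of_real (A $$ (i,j)) * v $ j) = 0"
proof -
  define s where "s = (\<Sum>i<n. \<Sum>j<n. cnj (v $ i) * complex_of_real (A $$ (i,j)) * v $ j)"
  have A_swap: "A $$ (i,j) = A $$ (j,i)" if "i < n" "j < n" for i j
    using sym that A by (metis carrier_matD index_transpose_mat(1))
  have "cnj s = (\<Sum>i<n. \<Sum>j<n. v $ i * complex_of_real (A $$ (i,j)) * cnj (v $ j))"
    unfolding s_def by simp
  also have "\<dots> = (\<Sum>j<n. \<Sum>i<n. v $ i * complex_of_real (A $$ (i,j)) * cnj (v $ j))"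
    by (rule sum.swap)
  also have "\<dots> = s" unfolding s_def
    by (intro sum.cong refl, subst A_swap, auto simp: mult.commute mult.left_commute)
  finally have "Im (cnj s) = Im s" by simp
  thus ?thesis unfolding s_def[symmetric] by simp
qed

lemma real_symmetric_has_eigenvalue:
  fixes A :: "real mat"
  assumes A: "A \<in> carrier_mat n n" and sym: "transpose_mat A = A" and n: "0 < n"
  shows "\<exists>e. eigenvalue A e"
proof -
  define Ac where "Ac = map_mat complex_of_real A"
  have Ac: "Ac \<in> carrier_mat n n" using A by (simp add: Ac_def)
  from spectrum_non_empty[OF Ac n] obtain z where z: "eigenvalue Ac z" unfolding spectrum_def by auto
  then obtain v where "eigenvector Ac v z" unfolding eigenvalue_def by auto
  hence v: "v \<in> carrier_vec n" and v0: "v \<noteq> 0\<^sub>v n" and Av: "Ac *\<^sub>v v = z \<cdot>\<^sub>v v"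
    using Ac unfolding eigenvector_def by auto
  define r where "r = (\<Sum>i<n. (cmod (v $ i))^2)"
  have row: "z * v $ i = (\<Sum>j<n. complex_of_real (A $$ (i,j)) * v $ j)" if i: "i < n" for i
  proof -
    have "z * v $ i = (Ac *\<^sub>v v) $ i" using Av i v by simp
    also have "\<dots> = (\<Sum>j<n. complex_of_real (A $$ (i,j)) * v $ j)"
      using i v A Ac unfolding Ac_def by (auto simp: scalar_prod_def lessThan_atLeast0 intro!: sum.cong)
    finally show ?thesis .
  qed
  have "(\<Sum>i<n. \<Sum>j<n. cnj (v $ i) * complex_of_real (A $$ (i,j)) * v $ j)
        = (\<Sum>i<n. cnj (v $ i) * (z * v $ i))"
    by (intro sum.cong refl, subst row, auto simp: sum_distrib_left mult.assoc)
  also have "\<dots> = z * complex_of_real r"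
  proof -
    have "cnj (v $ i) * v $ i = complex_of_real ((cmod (v $ i))^2)" for i
      using complex_norm_square[of "v $ i"] by (simp add: mult.commute)
    thus ?thesis unfolding r_def of_real_sum by (simp add: sum_distrib_left mult.left_commute)
  qed
  finally have "Im (z * complex_of_real r) = 0"
    using hermitian_form_of_real_symmetric_is_real[OF A sym, of v] by simp
  moreover have "0 < r"
  proof -
    obtain i where i: "i < n" "v $ i \<noteq> 0" using v0 v by (metis carrier_vecD eq_vecI index_zero_vec)
    have "0 < (cmod (v $ i))^2" using i by simp
    also have "\<dots> \<le> r" unfolding r_def by (rule member_le_sum, insert i, auto)
    finally show ?thesis .
  qed
  ultimately have "z = complex_of_real (Re z)" by (simp add: complex_eq_iff)
  with z have "poly (char_poly Ac) (complex_of_real (Re z)) = 0"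
    using eigenvalue_root_char_poly[OF Ac] by auto
  also have "char_poly Ac = map_poly complex_of_real (char_poly A)"
    unfolding Ac_def by (rule of_real_hom.char_poly_hom[OF A])
  finally have "poly (char_poly A) (Re z) = 0" by simp
  thus ?thesis using eigenvalue_root_char_poly[OF A] by auto
qed

definition normalize_vec :: "real vec \<Rightarrow> real vec" where
  "normalize_vec v = (1 / sqrt (v \<bullet> v)) \<cdot>\<^sub>v v"

lemma scalar_prod_self_pos: "v \<in> carrier_vec n \<Longrightarrow> v \<noteq> 0\<^sub>v n \<Longrightarrow> 0 < v \<bullet> (v :: real vec)"
  using conjugate_square_greater_0_vec[of v n] by simp

lemma normalize_vec_carrier [simp]: "v \<in> carrier_vec n \<Longrightarrow> normalize_vec v \<in> carrier_vec n"
  unfolding normalize_vec_def by simp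

lemma scalar_prod_normalize_vec:
  assumes "v \<in> carrier_vec n" "w \<in> carrier_vec n"
  shows "normalize_vec v \<bullet> normalize_vec w = (v \<bullet> w) / (sqrt (v \<bullet> v) * sqrt (w \<bullet> w))"
  unfolding normalize_vec_def using assms by simp

lemma normalize_vec_unit:
  assumes "v \<in> carrier_vec n" "v \<noteq> 0\<^sub>v n"
  shows "normalize_vec v \<bullet> normalize_vec v = 1"
  using scalar_prod_normalize_vec[OF assms(1) assms(1)] scalar_prod_self_pos[OF assms]
  by simp

lemma normalize_vec_of_unit: "v \<bullet> v = 1 \<Longrightarrow> normalize_vec v = v"
  unfolding normalize_vec_def by simp

lemma eigenvector_normalize_vec:
  assumes A: "A \<in> carrier_mat n n" and v: "v \<in> carrier_vec n" and Av: "A *\<^sub>v v = e \<cdot>\<^sub>v v"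
  shows "A *\<^sub>v normalize_vec v = e \<cdot>\<^sub>v normalize_vec v"
  unfolding normalize_vec_def mult_mat_vec[OF A v] Av by (simp add: smult_smult_assoc mult.commute)

lemma real_symmetric_unit_eigenvector:
  fixes A :: "real mat"
  assumes A: "A \<in> carrier_mat n n" and sym: "transpose_mat A = A" and n: "0 < n"
  obtains e u where "u \<in> carrier_vec n" "u \<bullet> u = 1" "A *\<^sub>v u = e \<cdot>\<^sub>v u"
proof -
  obtain e where "eigenvalue A e" using real_symmetric_has_eigenvalue[OF A sym n] by auto
  from find_eigenvector[OF A this] obtain v where "eigenvector A v e" by auto
  hence v: "v \<in> carrier_vec n" "v \<noteq> 0\<^sub>v n" and Av: "A *\<^sub>v v = e \<cdot>\<^sub>v v"
    using A unfolding eigenvector_def by auto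
  show thesis
    using that[OF _ normalize_vec_unit[OF v] eigenvector_normalize_vec[OF A v(1) Av]] v by simp
qed

lemma orthonormal_mat_of_normalized_cols:
  fixes ws :: "real vec list"
  assumes ws: "set ws \<subseteq> carrier_vec n" "corthogonal ws" "length ws = n"
  defines "Q \<equiv> mat_of_cols n (map normalize_vec ws)"
  shows "transpose_mat Q * Q = 1\<^sub>m n"
proof (rule eq_matI)
  fix i j assume "i < dim_row (1\<^sub>m n)" "j < dim_col (1\<^sub>m n)"
  hence i: "i < n" and j: "j < n" by auto
  have wsc: "ws ! k \<in> carrier_vec n" if "k < n" for k using ws that by auto
  have col: "col Q k = normalize_vec (ws ! k)" if "k < n" for k
    unfolding Q_def using that ws wsc by (subst col_mat_of_cols, auto)
  have "(transpose_mat Q * Q) $$ (i,j) = normalize_vec (ws ! i) \<bullet> normalize_vec (ws ! j)"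
    using i j ws by (simp add: Q_def col[symmetric])
  also have "\<dots> = 1\<^sub>m n $$ (i,j)"
  proof (cases "i = j")
    case True
    have "ws ! i \<noteq> 0\<^sub>v n" using corthogonalD[OF ws(2), of i i] ws(3) i wsc[OF i] by auto
    thus ?thesis using True i normalize_vec_unit[OF wsc[OF i]] by simp
  next
    case False
    hence "ws ! i \<bullet> ws ! j = 0" using corthogonalD[OF ws(2), of i j] ws(3) i j by auto
    thus ?thesis using False i j scalar_prod_normalize_vec[OF wsc[OF i] wsc[OF j]] by simp
  qed
  finally show "(transpose_mat Q * Q) $$ (i,j) = 1\<^sub>m n $$ (i,j)" .
qed (use ws(3) in \<open>auto simp: Q_def\<close>)

lemma orthonormal_completion:
  fixes u :: "real vec"
  assumes u: "u \<in> carrier_vec n" and u1: "u \<bullet> u = 1"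
  obtains Q where "Q \<in> carrier_mat n n" "transpose_mat Q * Q = 1\<^sub>m n" "col Q 0 = u"
proof -
  interpret cof_vec_space n "TYPE(real)" .
  have u0: "u \<noteq> 0\<^sub>v n" using u1 by auto
  have n: "0 < n"
  proof (rule ccontr)
    assume "\<not> 0 < n"
    hence "u = 0\<^sub>v n" using u by (intro eq_vecI) auto
    thus False using u0 by simp
  qed
  define b where "b = basis_completion u"
  from basis_completion[OF u u0, folded b_def]
  have b: "distinct b" "\<not> lin_dep (set b)" "set b \<subseteq> carrier_vec n" "hd b = u" "length b = n"
    by auto
  from b(4,5) n obtain vs where bv: "b = u # vs" by (cases b, auto)
  define ws where "ws = gram_schmidt n b"
  from gram_schmidt_result[OF b(3,1,2) ws_def]
  have ws: "set ws \<subseteq> carrier_vec n" "corthogonal ws" "length ws = n" by (auto simp: b(5))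
  have "hd ws = u" unfolding ws_def bv using u by simp
  hence "ws ! 0 = u" using ws(3) n by (cases ws, auto)
  hence "col (mat_of_cols n (map normalize_vec ws)) 0 = u"
    using ws n u1 by (subst col_mat_of_cols, auto simp: normalize_vec_of_unit)
  moreover have "mat_of_cols n (map normalize_vec ws) \<in> carrier_mat n n"
    using ws(3) mat_of_cols_carrier(1)[of n "map normalize_vec ws"] by simp
  ultimately show thesis using that orthonormal_mat_of_normalized_cols[OF ws] by blast
qed

definition orth_diag :: "nat \<Rightarrow> real mat \<Rightarrow> real mat \<Rightarrow> real mat \<Rightarrow> bool" where
  "orth_diag n A U D \<longleftrightarrow> U \<in> carrier_mat n n \<and> D \<in> carrier_mat n n \<and> diagonal_mat D \<and>
     transpose_mat U * U = 1\<^sub>m n \<and> A = U * D * transpose_mat U"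

lemma transpose_right_inverse_if_left_inverse:
  fixes U :: "real mat"
  shows "U \<in> carrier_mat n n \<Longrightarrow> transpose_mat U * U = 1\<^sub>m n \<Longrightarrow> U * transpose_mat U = 1\<^sub>m n"
  using mat_mult_left_right_inverse[of "transpose_mat U" n U] by auto

lemma symmetric_orthogonal_conj:
  fixes A Q :: "real mat"
  assumes A: "A \<in> carrier_mat n n" and Q: "Q \<in> carrier_mat n n" and sym: "transpose_mat A = A"
  shows "transpose_mat (transpose_mat Q * A * Q) = transpose_mat Q * A * Q"
proof -
  have Qt: "transpose_mat Q \<in> carrier_mat n n" using Q by auto
  have QtA: "transpose_mat Q * A \<in> carrier_mat n n" using Qt A by auto
  have "transpose_mat (transpose_mat Q * A * Q) = transpose_mat Q * transpose_mat (transpose_mat Q * A)"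
    by (rule transpose_mult[OF QtA Q])
  also have "transpose_mat (transpose_mat Q * A) = A * Q"
    using transpose_mult[OF Qt A] sym by simp
  finally show ?thesis using assoc_mult_mat[OF Qt A Q] by simp
qed

lemma first_col_orthogonal_conj:
  fixes A Q :: "real mat"
  assumes A: "A \<in> carrier_mat n n" and Q: "Q \<in> carrier_mat n n"
    and QtQ: "transpose_mat Q * Q = 1\<^sub>m n" and n: "0 < n"
    and eig: "A *\<^sub>v col Q 0 = e \<cdot>\<^sub>v col Q 0"
  shows "col (transpose_mat Q * A * Q) 0 = e \<cdot>\<^sub>v unit_vec n 0"
proof -
  have Qt: "transpose_mat Q \<in> carrier_mat n n" using Q by auto
  have u: "col Q 0 \<in> carrier_vec n" using Q by auto
  have "col (transpose_mat Q * A * Q) 0 = transpose_mat Q *\<^sub>v (A *\<^sub>v col Q 0)"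
    using col_mult2[of "transpose_mat Q * A" n n Q n 0] assoc_mult_mat_vec[OF Qt A u] Qt A Q n
    by simp
  also have "\<dots> = e \<cdot>\<^sub>v col (transpose_mat Q * Q) 0"
    unfolding eig mult_mat_vec[OF Qt u] using col_mult2[OF Qt Q n] by simp
  finally show ?thesis unfolding QtQ using n by simp
qed

lemma symmetric_first_col_block:
  fixes C :: "real mat"
  assumes C: "C \<in> carrier_mat (Suc m) (Suc m)" and sym: "transpose_mat C = C"
    and col0: "col C 0 = e \<cdot>\<^sub>v unit_vec (Suc m) 0"
  shows "C = four_block_mat (mat 1 1 (\<lambda>_. e)) (0\<^sub>m 1 m) (0\<^sub>m m 1)
               (mat m m (\<lambda>(i,j). C $$ (Suc i, Suc j)))"
proof -
  have C_i0: "C $$ (i, 0) = (if i = 0 then e else 0)" if "i < Suc m" for i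
    using arg_cong[OF col0, of "\<lambda>v. v $ i"] C that by (cases "i = 0") auto
  have C_0j: "C $$ (0, j) = (if j = 0 then e else 0)" if "j < Suc m" for j
    using C_i0[OF that] arg_cong[OF sym, of "\<lambda>M. M $$ (j, 0)"] C that by simp
  show ?thesis
    by (rule eq_matI) (use C C_i0 C_0j in \<open>auto split: nat.splits simp: less_Suc_eq_0_disj\<close>)
qed

lemma orth_diag_block:
  assumes "orth_diag m C V D"
  shows "orth_diag (Suc m) (four_block_mat (mat 1 1 (\<lambda>_. e)) (0\<^sub>m 1 m) (0\<^sub>m m 1) C)
           (four_block_mat (1\<^sub>m 1) (0\<^sub>m 1 m) (0\<^sub>m m 1) V)
           (four_block_mat (mat 1 1 (\<lambda>_. e)) (0\<^sub>m 1 m) (0\<^sub>m m 1) D)"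
proof -
  from assms have V: "V \<in> carrier_mat m m" and D: "D \<in> carrier_mat m m" and dD: "diagonal_mat D"
    and VtV: "transpose_mat V * V = 1\<^sub>m m" and CV: "C = V * D * transpose_mat V"
    unfolding orth_diag_def by auto
  define E where "E = mat 1 1 (\<lambda>_. e)"
  have E: "E \<in> carrier_mat 1 1" unfolding E_def by auto
  define B where "B = four_block_mat (1\<^sub>m 1) (0\<^sub>m 1 m) (0\<^sub>m m 1) V"
  have Bt: "transpose_mat B = four_block_mat (1\<^sub>m 1) (0\<^sub>m 1 m) (0\<^sub>m m 1) (transpose_mat V)"
    unfolding B_def using V by (subst transpose_four_block_mat, auto)
  have "transpose_mat B * B = 1\<^sub>m (Suc m)"
    unfolding Bt unfolding B_def using V VtV
    by (subst mult_four_block_mat[OF one_carrier_mat zero_carrier_mat zero_carrier_mat _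
          one_carrier_mat zero_carrier_mat zero_carrier_mat V], auto)
  moreover have "B * four_block_mat E (0\<^sub>m 1 m) (0\<^sub>m m 1) D * transpose_mat B
      = four_block_mat E (0\<^sub>m 1 m) (0\<^sub>m m 1) C"
    unfolding Bt unfolding B_def CV using V D E
    by (subst mult_four_block_mat[OF one_carrier_mat zero_carrier_mat zero_carrier_mat V E
          zero_carrier_mat zero_carrier_mat D], simp,
        subst mult_four_block_mat[of _ 1 1 _ m _ m], auto simp: E_def)
  moreover have "diagonal_mat (four_block_mat E (0\<^sub>m 1 m) (0\<^sub>m m 1) D)"
    using dD D unfolding diagonal_mat_def E_def by auto
  ultimately show ?thesis
    unfolding orth_diag_def E_def[symmetric] B_def[symmetric] using V D E
    by (auto simp: B_def intro!: four_block_carrier_mat[of _ 1 1 _ m, simplified])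
qed

lemma orth_diag_orthogonal_conj:
  fixes A Q :: "real mat"
  assumes A: "A \<in> carrier_mat n n" and Q: "Q \<in> carrier_mat n n"
    and QtQ: "transpose_mat Q * Q = 1\<^sub>m n" and diag: "orth_diag n (transpose_mat Q * A * Q) B D"
  shows "orth_diag n A (Q * B) D"
proof -
  from diag have B: "B \<in> carrier_mat n n" and D: "D \<in> carrier_mat n n"
    and BtB: "transpose_mat B * B = 1\<^sub>m n"
    and CB: "transpose_mat Q * A * Q = B * D * transpose_mat B"
    unfolding orth_diag_def by auto
  have Qt: "transpose_mat Q \<in> carrier_mat n n" and Bt: "transpose_mat B \<in> carrier_mat n n"
    using Q B by auto
  have QQt: "Q * transpose_mat Q = 1\<^sub>m n" by (rule transpose_right_inverse_if_left_inverse[OF Q QtQ])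
  have QBt: "transpose_mat (Q * B) = transpose_mat B * transpose_mat Q"
    by (rule transpose_mult[OF Q B])
  have "transpose_mat (Q * B) * (Q * B) = transpose_mat B * (transpose_mat Q * Q) * B"
    unfolding QBt using Q Qt B Bt by (simp add: assoc_mult_mat[of _ n n _ n _ n])
  hence "transpose_mat (Q * B) * (Q * B) = 1\<^sub>m n" using QtQ BtB B by simp
  moreover have "A = (Q * transpose_mat Q) * A * (Q * transpose_mat Q)" using QQt A by simp
  hence "A = Q * (transpose_mat Q * A * Q) * transpose_mat Q"
    using Q Qt A by (simp add: assoc_mult_mat[of _ n n _ n _ n])
  hence "A = (Q * B) * D * transpose_mat (Q * B)"
    unfolding CB QBt using Q Qt B Bt D by (simp add: assoc_mult_mat[of _ n n _ n _ n])
  ultimately show ?thesis using diag Q B unfolding orth_diag_def by auto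
qed

theorem real_symmetric_orth_diag:
  fixes A :: "real mat"
  assumes "A \<in> carrier_mat n n" and "transpose_mat A = A"
  shows "\<exists>U D. orth_diag n A U D"
  using assms
proof (induction n arbitrary: A)
  case 0
  show ?case
    by (rule exI[of _ "1\<^sub>m 0"], rule exI[of _ "0\<^sub>m 0 0"])
      (use 0 in \<open>auto simp: orth_diag_def diagonal_mat_def\<close>)
next
  case (Suc m A)
  have A: "A \<in> carrier_mat (Suc m) (Suc m)" and sym: "transpose_mat A = A" using Suc.prems by auto
  obtain e u where u: "u \<in> carrier_vec (Suc m)" "u \<bullet> u = 1" and Au: "A *\<^sub>v u = e \<cdot>\<^sub>v u"
    using real_symmetric_unit_eigenvector[OF A sym zero_less_Suc] by blast
  obtain Q where Q: "Q \<in> carrier_mat (Suc m) (Suc m)" and QtQ: "transpose_mat Q * Q = 1\<^sub>m (Suc m)"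
    and Q0: "col Q 0 = u"
    using orthonormal_completion[OF u] by blast
  \<comment> \<open>Deflation: in an orthonormal basis starting with \<open>u\<close>, \<open>A\<close> splits as \<open>[e] \<oplus> C'\<close>.\<close>
  define C where "C = transpose_mat Q * A * Q"
  have C: "C \<in> carrier_mat (Suc m) (Suc m)" unfolding C_def using Q A by auto
  have C_sym: "transpose_mat C = C" unfolding C_def by (rule symmetric_orthogonal_conj[OF A Q sym])
  have C_block: "C = four_block_mat (mat 1 1 (\<lambda>_. e)) (0\<^sub>m 1 m) (0\<^sub>m m 1)
                       (mat m m (\<lambda>(i,j). C $$ (Suc i, Suc j)))"
    by (rule symmetric_first_col_block[OF C C_sym],
        unfold C_def, rule first_col_orthogonal_conj[OF A Q QtQ], use Au Q0 in auto)
  have "C $$ (j, i) = C $$ (i, j)" if "i < Suc m" "j < Suc m" for i j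
    using arg_cong[OF C_sym, of "\<lambda>M. M $$ (i, j)"] C that by simp
  hence "transpose_mat (mat m m (\<lambda>(i,j). C $$ (Suc i, Suc j))) = mat m m (\<lambda>(i,j). C $$ (Suc i, Suc j))"
    by (intro eq_matI) auto
  then obtain V D where "orth_diag m (mat m m (\<lambda>(i,j). C $$ (Suc i, Suc j))) V D"
    using Suc.IH[of "mat m m (\<lambda>(i,j). C $$ (Suc i, Suc j))"] by auto
  from orth_diag_block[OF this, of e, folded C_block]
  show ?case unfolding C_def using orth_diag_orthogonal_conj[OF A Q QtQ] by blast
qed

section \<open>Eigenvalue monotonicity in the Loewner order\<close>

lemma mem_eig_mset_iff_eigenvalue:
  assumes A: "A \<in> carrier_mat n n"
  shows "l \<in># eig_mset A \<longleftrightarrow> eigenvalue A l"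
proof -
  have "char_poly A \<noteq> 0" using degree_monic_char_poly[OF A] by auto
  thus ?thesis unfolding eig_mset_def eigenvalue_root_char_poly[OF A] by simp
qed

lemma proots_linear_factors: "proots (\<Prod>a \<leftarrow> xs. [:- a, 1:]) = mset (xs :: real list)"
proof (induction xs)
  case (Cons a xs)
  have "(\<Prod>a \<leftarrow> xs. [:- a, 1:]) \<noteq> 0" by (simp only: prod_list_zero_iff, auto)
  hence "proots ([:- a, 1:] * (\<Prod>a \<leftarrow> xs. [:- a, 1:])) = {#a#} + proots (\<Prod>a \<leftarrow> xs. [:- a, 1:])"
    using proots_linear_factor[of "-a"] by (subst proots_mult) auto
  thus ?case using Cons by simp
qed simp

lemma eig_mset_orth_diag:
  assumes A: "A \<in> carrier_mat n n" and diag: "orth_diag n A U D"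
  shows "eig_mset A = mset (diag_mat D)"
proof -
  from diag have U: "U \<in> carrier_mat n n" and D: "D \<in> carrier_mat n n" and dD: "diagonal_mat D"
    and UtU: "transpose_mat U * U = 1\<^sub>m n" and AU: "A = U * D * transpose_mat U"
    unfolding orth_diag_def by auto
  have "similar_mat A D" unfolding similar_mat_def similar_mat_wit_def Let_def
    using A U D UtU AU transpose_right_inverse_if_left_inverse[OF U UtU]
    by (intro exI[of _ U] exI[of _ "transpose_mat U"]) auto
  hence "char_poly A = char_poly D" by (rule char_poly_similar)
  also have "\<dots> = (\<Prod>a \<leftarrow> diag_mat D. [:- a, 1:])"
    using dD D unfolding diagonal_mat_def upper_triangular_def
    by (intro char_poly_upper_triangular[OF D]) auto
  finally show ?thesis unfolding eig_mset_def by (simp add: proots_linear_factors)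
qed

lemma quadratic_form_orth_diag:
  assumes diag: "orth_diag n A U D" and x: "x \<in> carrier_vec n"
  shows "x \<bullet> (A *\<^sub>v x) = (\<Sum>k\<in>{0..<n}. D $$ (k,k) * (col U k \<bullet> x)^2)"
    and "x \<bullet> x = (\<Sum>k\<in>{0..<n}. (col U k \<bullet> x)^2)"
proof -
  from diag have U: "U \<in> carrier_mat n n" and D: "D \<in> carrier_mat n n" and dD: "diagonal_mat D"
    and UtU: "transpose_mat U * U = 1\<^sub>m n" and AU: "A = U * D * transpose_mat U"
    unfolding orth_diag_def by auto
  have Ut: "transpose_mat U \<in> carrier_mat n n" using U by auto
  define c where "c = transpose_mat U *\<^sub>v x"
  have c: "c \<in> carrier_vec n" unfolding c_def using Ut x by auto
  have c_k: "c $ k = col U k \<bullet> x" if "k < n" for k unfolding c_def using that U by auto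
  have move: "x \<bullet> (U *\<^sub>v y) = c \<bullet> y" if y: "y \<in> carrier_vec n" for y
    unfolding c_def using transpose_vec_mult_scalar[OF U y x] by simp
  have Dc: "(D *\<^sub>v c) $ k = D $$ (k,k) * c $ k" if k: "k < n" for k
  proof -
    have "(D *\<^sub>v c) $ k = (\<Sum>j\<in>{0..<n}. D $$ (k,j) * c $ j)"
      using D c k by (auto simp: scalar_prod_def)
    also have "\<dots> = (\<Sum>j\<in>{0..<n}. if j = k then D $$ (k,k) * c $ k else 0)"
      using dD D k unfolding diagonal_mat_def by (intro sum.cong) auto
    finally show ?thesis using k by simp
  qed
  have "A *\<^sub>v x = U *\<^sub>v (D *\<^sub>v c)" unfolding AU c_def using U D Ut x
    by (simp add: assoc_mult_mat_vec[of _ n n _ n])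
  hence "x \<bullet> (A *\<^sub>v x) = c \<bullet> (D *\<^sub>v c)" using move[of "D *\<^sub>v c"] D c by auto
  also have "\<dots> = (\<Sum>k\<in>{0..<n}. c $ k * (D $$ (k,k) * c $ k))"
    unfolding scalar_prod_def[of c] using c D
    by (intro sum.cong) (auto simp: Dc simp del: index_mult_mat_vec)
  also have "\<dots> = (\<Sum>k\<in>{0..<n}. D $$ (k,k) * (col U k \<bullet> x)^2)"
    by (intro sum.cong refl) (simp add: c_k power2_eq_square)
  finally show "x \<bullet> (A *\<^sub>v x) = (\<Sum>k\<in>{0..<n}. D $$ (k,k) * (col U k \<bullet> x)^2)" .
  have "x = U *\<^sub>v c"
    unfolding c_def using assoc_mult_mat_vec[OF U Ut x] transpose_right_inverse_if_left_inverse[OF U UtU] x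
    by simp
  hence "x \<bullet> x = c \<bullet> c" using move[OF c] by metis
  also have "\<dots> = (\<Sum>k\<in>{0..<n}. (col U k \<bullet> x)^2)"
    using c by (auto simp: scalar_prod_def c_k power2_eq_square)
  finally show "x \<bullet> x = (\<Sum>k\<in>{0..<n}. (col U k \<bullet> x)^2)" .
qed

lemma shifted_quadratic_form_orth_diag:
  assumes "orth_diag n A U D" and "x \<in> carrier_vec n"
  shows "x \<bullet> (A *\<^sub>v x) - t * (x \<bullet> x) = (\<Sum>k\<in>{0..<n}. (D $$ (k,k) - t) * (col U k \<bullet> x)^2)"
  unfolding quadratic_form_orth_diag[OF assms]
  by (simp add: sum_distrib_left sum_subtractf algebra_simps)

text \<open>The vectors of \<open>I\<close>, padded by zero rows, form an \<open>n \<times> n\<close> matrix with a zero last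
  row; a nonzero vector in its kernel is orthogonal to \<open>I\<close>.\<close>
lemma exists_nonzero_orthogonal_vec:
  fixes I :: "real vec set"
  assumes fin: "finite I" and I: "I \<subseteq> carrier_vec n" and card: "card I < n"
  obtains x where "x \<in> carrier_vec n" "x \<noteq> 0\<^sub>v n" "\<forall>w\<in>I. w \<bullet> x = 0"
proof -
  obtain xs where xs: "set xs = I" "distinct xs" using finite_distinct_list[OF fin] by auto
  have r: "length xs < n" using distinct_card[OF xs(2)] card xs(1) by simp
  define c where "c = (\<lambda>i. if i < length xs then xs ! i else 0\<^sub>v n)"
  have c: "c \<in> {0..<n} \<rightarrow> carrier_vec n" unfolding c_def using I xs(1) nth_mem by fastforce
  define R where "R = mat\<^sub>r n n (\<lambda>i. if i = n - 1 then 0\<^sub>v n else c i)"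
  have R: "R \<in> carrier_mat n n" unfolding R_def by auto
  have "det R = 0" unfolding R_def by (rule det_row_0[OF _ c]) (use r in auto)
  then obtain x where x: "x \<in> carrier_vec n" "x \<noteq> 0\<^sub>v n" "R *\<^sub>v x = 0\<^sub>v n"
    using det_0_iff_vec_prod_zero[OF R] by auto
  have "w \<bullet> x = 0" if "w \<in> I" for w
  proof -
    obtain i where i: "i < length xs" "w = xs ! i" using xs(1) \<open>w \<in> I\<close> by (auto simp: in_set_conv_nth)
    have "w \<in> carrier_vec n" using I \<open>w \<in> I\<close> by auto
    hence "row R i = w" unfolding R_def c_def using i r by auto
    hence "(R *\<^sub>v x) $ i = w \<bullet> x" using R i r by simp
    thus "w \<bullet> x = 0" using x(3) i r by simp
  qed
  thus thesis using that x by auto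
qed

lemma quadratic_form_gt_if_orthogonal_to_low_eigenvectors:
  assumes diag: "orth_diag n A U D" and x: "x \<in> carrier_vec n" "x \<noteq> 0\<^sub>v n"
    and orth: "\<And>k. k < n \<Longrightarrow> D $$ (k,k) \<le> t \<Longrightarrow> col U k \<bullet> x = 0"
  shows "t * (x \<bullet> x) < x \<bullet> (A *\<^sub>v x)"
proof -
  have "\<exists>k<n. col U k \<bullet> x \<noteq> 0"
  proof (rule ccontr)
    assume "\<not> ?thesis"
    hence "x \<bullet> x = 0" unfolding quadratic_form_orth_diag(2)[OF diag x(1)] by simp
    thus False using scalar_prod_self_pos[OF x] by simp
  qed
  then obtain k where k: "k < n" "col U k \<bullet> x \<noteq> 0" by blast
  have "t < D $$ (k,k)" using k orth[of k] by force
  hence "0 < (D $$ (k,k) - t) * (col U k \<bullet> x)^2" using k by simp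
  also have "\<dots> \<le> (\<Sum>j\<in>{0..<n}. (D $$ (j,j) - t) * (col U j \<bullet> x)^2)"
  proof (rule member_le_sum)
    show "0 \<le> (D $$ (j,j) - t) * (col U j \<bullet> x)^2" if "j \<in> {0..<n} - {k}" for j
      using orth[of j] that by (cases "D $$ (j,j) \<le> t") auto
  qed (use k in auto)
  also have "\<dots> = x \<bullet> (A *\<^sub>v x) - t * (x \<bullet> x)"
    by (rule shifted_quadratic_form_orth_diag[OF diag x(1), symmetric])
  finally show ?thesis by simp
qed

lemma quadratic_form_le_if_orthogonal_to_high_eigenvectors:
  assumes diag: "orth_diag n A U D" and x: "x \<in> carrier_vec n"
    and orth: "\<And>k. k < n \<Longrightarrow> t < D $$ (k,k) \<Longrightarrow> col U k \<bullet> x = 0"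
  shows "x \<bullet> (A *\<^sub>v x) \<le> t * (x \<bullet> x)"
proof -
  have "x \<bullet> (A *\<^sub>v x) - t * (x \<bullet> x) = (\<Sum>j\<in>{0..<n}. (D $$ (j,j) - t) * (col U j \<bullet> x)^2)"
    by (rule shifted_quadratic_form_orth_diag[OF diag x])
  also have "\<dots> \<le> 0"
  proof (rule sum_nonpos)
    show "(D $$ (j,j) - t) * (col U j \<bullet> x)^2 \<le> 0" if "j \<in> {0..<n}" for j
      using orth[of j] that by (cases "t < D $$ (j,j)") (auto simp: mult_nonpos_nonneg)
  qed
  finally show ?thesis by simp
qed

text \<open>A vector orthogonal to the eigenvectors of \<open>A\<close> below \<open>t\<close> and to those of \<open>B\<close> above \<open>t\<close>
  would have Rayleigh quotient \<open>> t\<close> for \<open>A\<close> but \<open>\<le> t\<close> for \<open>B\<close>; such a vector exists as soon as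
  there are fewer than \<open>n\<close> of these eigenvectors.\<close>
lemma card_diag_gt_mono:
  assumes diag: "orth_diag n A U D" and diag': "orth_diag n B V E"
    and le: "\<And>x. x \<in> carrier_vec n \<Longrightarrow> x \<bullet> (A *\<^sub>v x) \<le> x \<bullet> (B *\<^sub>v x)"
  shows "card {k\<in>{0..<n}. t < D $$ (k,k)} \<le> card {k\<in>{0..<n}. t < E $$ (k,k)}"
proof (rule ccontr)
  assume contra: "\<not> ?thesis"
  have U: "U \<in> carrier_mat n n" and V: "V \<in> carrier_mat n n"
    using diag diag' unfolding orth_diag_def by auto
  define S where "S = {k\<in>{0..<n}. D $$ (k,k) \<le> t}"
  define T where "T = {k\<in>{0..<n}. t < E $$ (k,k)}"
  have "{k\<in>{0..<n}. t < D $$ (k,k)} \<union> S = {0..<n}" "{k\<in>{0..<n}. t < D $$ (k,k)} \<inter> S = {}"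
    unfolding S_def by auto
  hence "card {k\<in>{0..<n}. t < D $$ (k,k)} + card S = n"
    by (metis card_Un_disjoint card_atLeastLessThan diff_zero finite_Un finite_atLeastLessThan)
  hence "card (col U ` S \<union> col V ` T) < n"
    using contra card_Un_le[of "col U ` S" "col V ` T"]
      card_image_le[of S "col U"] card_image_le[of T "col V"]
    unfolding T_def S_def by fastforce
  moreover have "col U ` S \<union> col V ` T \<subseteq> carrier_vec n"
    unfolding S_def T_def using U V by auto
  ultimately obtain x where x: "x \<in> carrier_vec n" "x \<noteq> 0\<^sub>v n"
    and orth: "\<forall>w \<in> col U ` S \<union> col V ` T. w \<bullet> x = 0"
    using exists_nonzero_orthogonal_vec[of "col U ` S \<union> col V ` T"] unfolding S_def T_def by auto
  have "t * (x \<bullet> x) < x \<bullet> (A *\<^sub>v x)"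
    by (rule quadratic_form_gt_if_orthogonal_to_low_eigenvectors[OF diag x])
      (use orth in \<open>auto simp: S_def\<close>)
  also have "\<dots> \<le> x \<bullet> (B *\<^sub>v x)" by (rule le[OF x(1)])
  also have "\<dots> \<le> t * (x \<bullet> x)"
    by (rule quadratic_form_le_if_orthogonal_to_high_eigenvectors[OF diag' x(1)])
      (use orth in \<open>auto simp: T_def\<close>)
  finally show False by simp
qed
lemma size_filter_mset_diag:
  assumes D: "D \<in> carrier_mat n n"
  shows "size (filter_mset ((<) t) (mset (diag_mat D))) = card {k\<in>{0..<n}. t < D $$ (k,k)}"
proof -
  have "size (filter_mset ((<) t) (mset (diag_mat D))) = length (filter ((<) t) (diag_mat D))"
    by (metis mset_filter size_mset)
  also have "\<dots> = card {k\<in>{0..<n}. t < D $$ (k,k)}"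
    unfolding length_filter_conv_card using D by (intro arg_cong[of _ _ card]) (auto simp: diag_mat_def)
  finally show ?thesis .
qed

theorem size_eig_mset_symmetric:
  fixes A :: "real mat"
  assumes A: "A \<in> carrier_mat n n" and sym: "transpose_mat A = A"
  shows "size (eig_mset A) = n"
proof -
  obtain U D where diag: "orth_diag n A U D" using real_symmetric_orth_diag[OF A sym] by blast
  thus ?thesis using eig_mset_orth_diag[OF A diag] unfolding orth_diag_def diag_mat_def by auto
qed

theorem eig_mset_count_gt_mono:
  fixes A B :: "real mat"
  assumes A: "A \<in> carrier_mat n n" and A_sym: "transpose_mat A = A"
    and B: "B \<in> carrier_mat n n" and B_sym: "transpose_mat B = B"
    and le: "\<And>x. x \<in> carrier_vec n \<Longrightarrow> x \<bullet> (A *\<^sub>v x) \<le> x \<bullet> (B *\<^sub>v x)"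
  shows "size (filter_mset ((<) t) (eig_mset A)) \<le> size (filter_mset ((<) t) (eig_mset B))"
proof -
  obtain U D where diag: "orth_diag n A U D" using real_symmetric_orth_diag[OF A A_sym] by blast
  obtain V E where diag': "orth_diag n B V E" using real_symmetric_orth_diag[OF B B_sym] by blast
  have "D \<in> carrier_mat n n" "E \<in> carrier_mat n n" using diag diag' unfolding orth_diag_def by auto
  thus ?thesis
    unfolding eig_mset_orth_diag[OF A diag] eig_mset_orth_diag[OF B diag']
    using size_filter_mset_diag[of D n t] size_filter_mset_diag[of E n t]
      card_diag_gt_mono[OF diag diag' le, of t] by simp
qed

section \<open>Eigenvalues of stable positive semidefinite matrices\<close>

lemma eigenvalue_nonneg_if_psd:
  fixes A :: "real mat"
  assumes A: "A \<in> carrier_mat n n" and psd: "\<forall>x \<in> carrier_vec n. 0 \<le> x \<bullet> (A *\<^sub>v x)"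
    and "eigenvalue A l"
  shows "0 \<le> l"
proof -
  obtain v where "eigenvector A v l" using \<open>eigenvalue A l\<close> unfolding eigenvalue_def by auto
  hence v: "v \<in> carrier_vec n" "v \<noteq> 0\<^sub>v n" and Av: "A *\<^sub>v v = l \<cdot>\<^sub>v v"
    using A unfolding eigenvector_def by auto
  have "0 \<le> v \<bullet> (A *\<^sub>v v)" using psd v(1) by blast
  also have "\<dots> = l * (v \<bullet> v)" unfolding Av using v(1) by simp
  finally show ?thesis using scalar_prod_self_pos[OF v] by (simp add: zero_le_mult_iff)
qed

lemma shifted_scaled_eigenvector:
  fixes A :: "real mat"
  assumes A: "A \<in> carrier_mat n n" and v: "v \<in> carrier_vec n" and Av: "A *\<^sub>v v = l \<cdot>\<^sub>v v"
  shows "(a \<cdot>\<^sub>m (A - \<alpha> \<cdot>\<^sub>m 1\<^sub>m n)) *\<^sub>v v = (a * (l - \<alpha>)) \<cdot>\<^sub>v v"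
proof -
  have "(A - \<alpha> \<cdot>\<^sub>m 1\<^sub>m n) *\<^sub>v v = A *\<^sub>v v - (\<alpha> \<cdot>\<^sub>m 1\<^sub>m n) *\<^sub>v v"
    using A v by (subst minus_mult_distrib_mat_vec) auto
  also have "(\<alpha> \<cdot>\<^sub>m 1\<^sub>m n) *\<^sub>v v = \<alpha> \<cdot>\<^sub>v v" using v by (intro eq_vecI) auto
  finally have shift: "(A - \<alpha> \<cdot>\<^sub>m 1\<^sub>m n) *\<^sub>v v = (l - \<alpha>) \<cdot>\<^sub>v v"
    unfolding Av using v by (intro eq_vecI) (auto simp: algebra_simps)
  have "(a \<cdot>\<^sub>m (A - \<alpha> \<cdot>\<^sub>m 1\<^sub>m n)) *\<^sub>v v = a \<cdot>\<^sub>v ((A - \<alpha> \<cdot>\<^sub>m 1\<^sub>m n) *\<^sub>v v)"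
    using A v by (intro eq_vecI) auto
  thus ?thesis unfolding shift by (simp add: smult_smult_assoc)
qed

lemma abs_shifted_eigenvalue_le_spectral_radius:
  fixes A :: "real mat"
  assumes A: "A \<in> carrier_mat n n" and "eigenvalue A l"
  shows "\<bar>a * (l - \<alpha>)\<bar> \<le> real_spectral_radius (a \<cdot>\<^sub>m (A - \<alpha> \<cdot>\<^sub>m 1\<^sub>m n))"
proof -
  define X where "X = a \<cdot>\<^sub>m (A - \<alpha> \<cdot>\<^sub>m 1\<^sub>m n)"
  have X: "X \<in> carrier_mat n n" unfolding X_def using A by auto
  obtain v where "eigenvector A v l" using \<open>eigenvalue A l\<close> unfolding eigenvalue_def by auto
  hence v: "v \<in> carrier_vec n" "v \<noteq> 0\<^sub>v n" and Av: "A *\<^sub>v v = l \<cdot>\<^sub>v v"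
    using A unfolding eigenvector_def by auto
  have "X *\<^sub>v v = (a * (l - \<alpha>)) \<cdot>\<^sub>v v"
    unfolding X_def by (rule shifted_scaled_eigenvector[OF A v(1) Av])
  hence "eigenvector X v (a * (l - \<alpha>))" unfolding eigenvector_def using X v by auto
  from of_real_hom.eigenvector_hom[OF X this]
  have "complex_of_real (a * (l - \<alpha>)) \<in> spectrum (map_mat complex_of_real X)"
    unfolding spectrum_def eigenvalue_def by auto
  moreover have "0 < n" using v by (metis carrier_vecD eq_vecI less_nat_zero_code index_zero_vec(2) neq0_conv)
  ultimately have "cmod (complex_of_real (a * (l - \<alpha>))) \<le> spectral_radius (map_mat complex_of_real X)"
    using spectral_radius_mem_max(2)[of "map_mat complex_of_real X" n] X by auto
  hence "\<bar>a * (l - \<alpha>)\<bar> \<le> spectral_radius (map_mat complex_of_real X)" by (simp only: norm_of_real)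
  thus ?thesis unfolding real_spectral_radius_def X_def .
qed

lemma eig_mset_psd_stable:
  fixes A :: "real mat"
  assumes A: "A \<in> carrier_mat n n" and psd: "\<forall>x \<in> carrier_vec n. 0 \<le> x \<bullet> (A *\<^sub>v x)"
    and stable: "real_spectral_radius (a \<cdot>\<^sub>m (A - \<alpha> \<cdot>\<^sub>m 1\<^sub>m n)) < 1"
    and l: "l \<in># eig_mset A"
  shows "0 \<le> l" and "a^2 * (l - \<alpha>)^2 < 1"
proof -
  have eig: "eigenvalue A l" using l mem_eig_mset_iff_eigenvalue[OF A] by simp
  show "0 \<le> l" by (rule eigenvalue_nonneg_if_psd[OF A psd eig])
  have "\<bar>a * (l - \<alpha>)\<bar> < 1"
    using abs_shifted_eigenvalue_le_spectral_radius[OF A eig, of a \<alpha>] stable by linarith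
  hence "\<bar>a * (l - \<alpha>)\<bar>^2 < 1" by (simp add: abs_square_less_1)
  thus "a^2 * (l - \<alpha>)^2 < 1" by (simp add: power_mult_distrib)
qed

section \<open>Monotonicity of the MSD\<close>

text \<open>The monotonicity rests on the identity
  \<open>y\<^sup>2 (1 - a\<^sup>2 (x - \<alpha>)\<^sup>2) - x\<^sup>2 (1 - a\<^sup>2 (y - \<alpha>)\<^sup>2) = (y - x) ((x + y) (1 - a\<^sup>2 \<alpha>\<^sup>2) + 2 a\<^sup>2 \<alpha> x y)\<close>.\<close>
lemma msd_term_mono:
  fixes x y a \<alpha> c :: real
  assumes x: "0 \<le> x" and xy: "x \<le> y" and a\<alpha>: "a^2 * \<alpha>^2 < 1" and \<alpha>: "0 \<le> \<alpha>" and c: "0 \<le> c"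
    and dx: "a^2 * (x - \<alpha>)^2 < 1" and dy: "a^2 * (y - \<alpha>)^2 < 1"
  shows "c * x^2 / (1 - a^2 * (x - \<alpha>)^2) \<le> c * y^2 / (1 - a^2 * (y - \<alpha>)^2)"
proof -
  define p where "p = 1 - a^2 * (x - \<alpha>)^2"
  define q where "q = 1 - a^2 * (y - \<alpha>)^2"
  have p: "0 < p" and q: "0 < q" using dx dy unfolding p_def q_def by auto
  have "y^2 * p - x^2 * q = (y - x) * ((x + y) * (1 - a^2 * \<alpha>^2) + 2 * a^2 * \<alpha> * x * y)"
    unfolding p_def q_def by (simp add: algebra_simps power2_eq_square)
  also have "0 \<le> \<dots>"
    using x xy a\<alpha> \<alpha> by (intro mult_nonneg_nonneg add_nonneg_nonneg) auto
  finally have "x^2 / p \<le> y^2 / q" using p q by (simp add: divide_simps mult.commute)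
  hence "c * (x^2 / p) \<le> c * (y^2 / q)" by (rule mult_left_mono[OF _ c])
  thus ?thesis unfolding p_def q_def by simp
qed

text \<open>Remove the maximum of each multiset and induct: the threshold condition forces
  \<open>Max A \<le> Max B\<close> and is inherited by the remainders.\<close>
lemma sum_mset_image_mono_if_dominated:
  fixes A B :: "real multiset" and f :: "real \<Rightarrow> real"
  assumes "size A = size B"
    and "\<forall>x\<in>#A. \<forall>y\<in>#B. x \<le> y \<longrightarrow> f x \<le> f y"
    and "\<forall>t. size (filter_mset ((<) t) A) \<le> size (filter_mset ((<) t) B)"
  shows "sum_mset (image_mset f A) \<le> sum_mset (image_mset f B)"
  using assms
proof (induction "size A" arbitrary: A B)
  case 0
  thus ?case by auto
next
  case (Suc m A B)
  have "A \<noteq> {#}" "B \<noteq> {#}" using Suc.hyps(2) Suc.prems(1) by auto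
  define a where "a = Max (set_mset A)"
  define b where "b = Max (set_mset B)"
  have aA: "a \<in># A" and bB: "b \<in># B" unfolding a_def b_def using \<open>A \<noteq> {#}\<close> \<open>B \<noteq> {#}\<close> by auto
  have a_max: "x \<le> a" if "x \<in># A" for x unfolding a_def using that by simp
  have b_max: "y \<le> b" if "y \<in># B" for y unfolding b_def using that by simp
  have ab: "a \<le> b"
  proof (rule ccontr)
    assume "\<not> a \<le> b"
    hence "0 < size (filter_mset ((<) b) A)" using aA by (auto simp: nonempty_has_size[symmetric])
    moreover have "filter_mset ((<) b) B = {#}" using b_max by (auto simp: not_less)
    ultimately show False using Suc.prems(3) by (metis not_le size_empty)
  qed
  define A' where "A' = A - {#a#}"
  define B' where "B' = B - {#b#}"
  have A: "A = add_mset a A'" and B: "B = add_mset b B'" unfolding A'_def B'_def using aA bB by auto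
  have dominated': "size (filter_mset ((<) t) A') \<le> size (filter_mset ((<) t) B')" for t
  proof (cases "t < a")
    case True
    thus ?thesis using Suc.prems(3) ab unfolding A B by (auto dest: spec[of _ t])
  next
    case False
    have "x \<le> t" if "x \<in># A'" for x using a_max[of x] that False unfolding A by simp
    hence "size (filter_mset ((<) t) A') = 0" by (auto simp: not_less)
    thus ?thesis by linarith
  qed
  have "sum_mset (image_mset f A') \<le> sum_mset (image_mset f B')"
    using Suc.hyps(1)[of A' B'] Suc.hyps(2) Suc.prems(1,2) dominated' unfolding A B by auto
  moreover have "f a \<le> f b" using Suc.prems(2) aA bB ab by auto
  ultimately show ?case unfolding A B by simp
qed

lemma quadratic_form_rank_one_update:
  fixes P :: "real mat" and d x :: "real vec"
  assumes P: "P \<in> carrier_mat n n" and d: "d \<in> carrier_vec n" and x: "x \<in> carrier_vec n"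
  shows "x \<bullet> ((P + c \<cdot>\<^sub>m mat n n (\<lambda>(k,l). d $ k * d $ l)) *\<^sub>v x) = x \<bullet> (P *\<^sub>v x) + c * (d \<bullet> x)^2"
proof -
  have "(c \<cdot>\<^sub>m mat n n (\<lambda>(k,l). d $ k * d $ l)) *\<^sub>v x = (c * (d \<bullet> x)) \<cdot>\<^sub>v d"
  proof (rule eq_vecI)
    fix k assume "k < dim_vec ((c * (d \<bullet> x)) \<cdot>\<^sub>v d)"
    hence k: "k < n" using d by auto
    have "row (c \<cdot>\<^sub>m mat n n (\<lambda>(k,l). d $ k * d $ l)) k = (c * d $ k) \<cdot>\<^sub>v d"
      using k d by (intro eq_vecI) auto
    thus "((c \<cdot>\<^sub>m mat n n (\<lambda>(k,l). d $ k * d $ l)) *\<^sub>v x) $ k = ((c * (d \<bullet> x)) \<cdot>\<^sub>v d) $ k"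
      using k d x by simp
  qed (use d in auto)
  moreover have "(P + c \<cdot>\<^sub>m mat n n (\<lambda>(k,l). d $ k * d $ l)) *\<^sub>v x
      = P *\<^sub>v x + (c \<cdot>\<^sub>m mat n n (\<lambda>(k,l). d $ k * d $ l)) *\<^sub>v x"
    by (rule add_mult_distrib_mat_vec[OF P _ x]) auto
  ultimately show ?thesis
    using P d x comm_scalar_prod[OF x d]
    by (simp add: scalar_prod_add_distrib[of _ n] power2_eq_square)
qed

lemma remove_edge_carrier: "P \<in> carrier_mat N N \<Longrightarrow> remove_edge N P i j \<epsilon> \<in> carrier_mat N N"
  unfolding remove_edge_def Let_def by auto

lemma remove_edge_symmetric:
  assumes P: "P \<in> carrier_mat N N" and sym: "transpose_mat P = P"
  shows "transpose_mat (remove_edge N P i j \<epsilon>) = remove_edge N P i j \<epsilon>"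
proof (rule eq_matI)
  fix k l assume "k < dim_row (remove_edge N P i j \<epsilon>)" "l < dim_col (remove_edge N P i j \<epsilon>)"
  hence kl: "k < N" "l < N" using remove_edge_carrier[OF P, of i j \<epsilon>] by auto
  have "P $$ (l, k) = P $$ (k, l)" using arg_cong[OF sym, of "\<lambda>M. M $$ (k, l)"] P kl by simp
  thus "transpose_mat (remove_edge N P i j \<epsilon>) $$ (k, l) = remove_edge N P i j \<epsilon> $$ (k, l)"
    unfolding remove_edge_def Let_def using kl P by simp
qed (use remove_edge_carrier[OF P, of i j \<epsilon>] in auto)

lemma quadratic_form_remove_edge_mono:
  assumes P: "P \<in> carrier_mat N N" and eps: "0 \<le> \<epsilon>" and x: "x \<in> carrier_vec N"
  shows "x \<bullet> (P *\<^sub>v x) \<le> x \<bullet> (remove_edge N P i j \<epsilon> *\<^sub>v x)"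
  unfolding remove_edge_def Let_def
  using quadratic_form_rank_one_update[OF P _ x, of "unit_vec N i - unit_vec N j" \<epsilon>] eps
  by simp

theorem proposition2:
  fixes N :: nat and a \<alpha> sr2 sw2 \<epsilon> :: real and P :: "real mat" and i j :: nat
  assumes N: "N \<ge> 2"
    and alpha: "0 < \<alpha>" "\<alpha> \<le> 1"
    and sig: "sr2 \<ge> 0" "sw2 \<ge> 0"
    and P_dim: "P \<in> carrier_mat N N"
    and P_sym: "transpose_mat P = P"
    and P_nonneg: "\<forall>k<N. \<forall>l<N. P $$ (k, l) \<ge> 0"
    and P_rows: "\<forall>k<N. (\<Sum>l<N. P $$ (k, l)) = 1"
    and P_cols: "\<forall>l<N. (\<Sum>k<N. P $$ (k, l)) = 1"
    and P_eig: "\<forall>l \<in># eig_mset P. -1 < l \<and> l \<le> 1" "count (eig_mset P) 1 = 1"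
    and P_psd: "\<forall>x \<in> carrier_vec N. x \<bullet> (P *\<^sub>v x) \<ge> 0"
    and ij: "i < N" "j < N" "i \<noteq> j"
    and eps: "P $$ (i, j) = \<epsilon>" "\<epsilon> > 0"
    and a_bound: "\<bar>a\<bar> < 1 / \<bar>\<alpha>\<bar>"
    and stab1: "real_spectral_radius (a \<cdot>\<^sub>m (P - \<alpha> \<cdot>\<^sub>m 1\<^sub>m N)) < 1"
    and stab2: "real_spectral_radius (a \<cdot>\<^sub>m (remove_edge N P i j \<epsilon> - \<alpha> \<cdot>\<^sub>m 1\<^sub>m N)) < 1"
  shows "MSD_tilde a sr2 sw2 N P \<alpha> \<le> MSD_tilde a sr2 sw2 N (remove_edge N P i j \<epsilon>) \<alpha>"
proof -
  define P' where "P' = remove_edge N P i j \<epsilon>"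
  have P': "P' \<in> carrier_mat N N" and P'_sym: "transpose_mat P' = P'"
    unfolding P'_def using remove_edge_carrier[OF P_dim] remove_edge_symmetric[OF P_dim P_sym] by auto
  have loewner: "x \<bullet> (P *\<^sub>v x) \<le> x \<bullet> (P' *\<^sub>v x)" if "x \<in> carrier_vec N" for x
    unfolding P'_def using quadratic_form_remove_edge_mono[OF P_dim _ that] eps(2) by simp
  have P'_psd: "\<forall>x \<in> carrier_vec N. 0 \<le> x \<bullet> (P' *\<^sub>v x)" using P_psd loewner by fastforce
  have "\<bar>a * \<alpha>\<bar> < 1" using a_bound alpha by (simp add: abs_mult field_simps)
  hence a\<alpha>: "a^2 * \<alpha>^2 < 1" by (simp add: abs_square_less_1 power_mult_distrib[symmetric])
  define g where "g l = a^2 * \<alpha>^2 * sw2 * l^2 / (1 - a^2 * (l - \<alpha>)^2)" for l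
  have "sum_mset (image_mset g (eig_mset P)) \<le> sum_mset (image_mset g (eig_mset P'))"
  proof (rule sum_mset_image_mono_if_dominated)
    show "size (eig_mset P) = size (eig_mset P')"
      using size_eig_mset_symmetric[OF P_dim P_sym] size_eig_mset_symmetric[OF P' P'_sym] by simp
    show "\<forall>x\<in>#eig_mset P. \<forall>y\<in>#eig_mset P'. x \<le> y \<longrightarrow> g x \<le> g y"
      unfolding g_def using eig_mset_psd_stable[OF P_dim P_psd stab1] a\<alpha> alpha sig
        eig_mset_psd_stable[OF P' P'_psd stab2[folded P'_def]]
      by (auto intro!: msd_term_mono)
    show "\<forall>t. size (filter_mset ((<) t) (eig_mset P)) \<le> size (filter_mset ((<) t) (eig_mset P'))"
      using eig_mset_count_gt_mono[OF P_dim P_sym P' P'_sym loewner] by blast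
  qed
  hence "1 / real N * sum_mset (image_mset g (eig_mset P)) \<le> 1 / real N * sum_mset (image_mset g (eig_mset P'))"
    by (rule mult_left_mono) simp
  thus ?thesis unfolding MSD_tilde_def P'_def g_def by simp
qed

end
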